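(* The image of $\bar\Gamma(2)_2=[\bar\Gamma(2),\bar\Gamma(2)]$ in $\mathrm{PSL}_2(\mathbb{Z}/3\mathbb{Z})$ is equal to $D_3$. For every prime $p>3$, its image in $\mathrm{PSL}_2(\mathbb{Z}/p\mathbb{Z})$ is $\mathrm{PSL}_2(\mathbb{Z}/p\mathbb{Z})$.
   Context: $\bar\Gamma(2)=\Gamma(2)/\{\pm1\}\subset\mathrm{PSL}_2(\mathbb{Z})$, where $\Gamma(2)$ is the principal congruence subgroup of level $2$; images are taken under the reduction maps $\mathrm{PSL}_2(\mathbb{Z})\to\mathrm{PSL}_2(\mathbb{Z}/n\mathbb{Z})$. $D_3\subset\mathrm{PSL}_2(\mathbb{Z}/3\mathbb{Z})$ is the index-$3$ subgroup (the $2$-Sylow subgroup, isomorphic to the Klein four-group) consisting of the classes of $\pm I$, $\pm\begin{pmatrix}0&-1\\1&0\end{pmatrix}$, $\pm\begin{pmatrix}-1&1\\1&1\end{pmatrix}$, $\pm\begin{pmatrix}1&1\\1&-1\end{pmatrix}$. *)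

theory Defs
  imports "HOL-Algebra.Algebra" "HOL-Computational_Algebra.Primes"
begin

text \<open>2x2 integer matrices (a b; c d) represented as tuples (a, b, c, d).\<close>
type_synonym mat2 = "int \<times> int \<times> int \<times> int"

fun mmul :: "mat2 \<Rightarrow> mat2 \<Rightarrow> mat2" where
  "mmul (a, b, c, d) (a2, b2, c2, d2) = (a * a2 + b * c2, a * b2 + b * d2, c * a2 + d * c2, c * b2 + d * d2)"

fun mdet :: "mat2 \<Rightarrow> int" where
  "mdet (a, b, c, d) = a * d - b * c"

fun mneg :: "mat2 \<Rightarrow> mat2" where
  "mneg (a, b, c, d) = (-a, -b, -c, -d)"

definition I2 :: mat2 where "I2 = (1, 0, 0, 1)"

fun mred :: "int \<Rightarrow> mat2 \<Rightarrow> mat2" where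
  "mred n (a, b, c, d) = (a mod n, b mod n, c mod n, d mod n)"

definition SL2Z :: "mat2 monoid" where
  "SL2Z = \<lparr>carrier = {A. mdet A = 1}, monoid.mult = mmul, one = I2\<rparr>"

definition PM :: "mat2 set" where "PM = {I2, mneg I2}"

definition PSL2Z :: "mat2 set monoid" where
  "PSL2Z = SL2Z Mod PM"

definition Gamma2 :: "mat2 set" where
  "Gamma2 = {A \<in> carrier SL2Z. mred 2 A = mred 2 I2}"

definition Gamma2bar :: "mat2 set set" where
  "Gamma2bar = (\<lambda>A. PM #>\<^bsub>SL2Z\<^esub> A) ` Gamma2"

definition psl_red :: "int \<Rightarrow> mat2 set \<Rightarrow> mat2 set" where
  "psl_red n C = mred n ` C"

definition psl_class :: "int \<Rightarrow> mat2 \<Rightarrow> mat2 set" where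
  "psl_class n M = {mred n M, mred n (mneg M)}"

definition PSL2_mod :: "int \<Rightarrow> mat2 set set" where
  "PSL2_mod n = psl_class n ` {M. mdet M mod n = 1 mod n}"

text \<open>The Klein four subgroup D_3 of PSL_2(Z/3Z).\<close>
definition D3 :: "mat2 set set" where
  "D3 = psl_class 3 ` {I2, (0, -1, 1, 0), (-1, 1, 1, 1), (1, 1, 1, -1)}"

end

theory Submission
  imports Defs
begin

(* The coset map SL_2(Z) -> PSL_2(Z) is a homomorphism, so the derived group of the image of
   Gamma(2) is the image of the derived group D of Gamma(2); its reduction mod n consists of the
   classes {A, -A} mod n with A in D.
   Mod 3, every commutator of SL_2(Z/3) lies in the quaternion subgroup Q_8, whose image in
   PSL_2(Z/3) is D_3, and three explicit commutators of unipotent elements of Gamma(2) give the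
   non-trivial elements of D_3.
   Mod p > 3, Gamma(2) contains a matrix X congruent to (2 *; 0 1/2), and the commutator of X
   with the unipotent (1 2t; 0 1) is congruent to (1 6t; 0 1).  As 6 is invertible mod p, every
   upper and (by symmetry) every lower unipotent of SL_2(Z/p) is the reduction of an element of D,
   and these generate SL_2(Z/p). *)

fun madj :: "mat2 \<Rightarrow> mat2" where
  "madj (a, b, c, d) = (d, -b, -c, a)"

definition mcomm :: "mat2 \<Rightarrow> mat2 \<Rightarrow> mat2" where
  "mcomm A B = mmul (mmul (mmul A B) (madj A)) (madj B)"

lemma mmul_assoc: "mmul (mmul A B) C = mmul A (mmul B C)"
  by (cases A; cases B; cases C) (simp add: algebra_simps)

lemma mdet_mmul: "mdet (mmul A B) = mdet A * mdet B"
  by (cases A; cases B) (simp add: algebra_simps)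

lemma mdet_madj: "mdet (madj A) = mdet A"
  by (cases A) (simp add: algebra_simps)

lemma mmul_I2_left [simp]: "mmul I2 A = A"
  by (cases A) (simp add: I2_def)

lemma mmul_madj_left: "mdet A = 1 \<Longrightarrow> mmul (madj A) A = I2"
  by (cases A) (simp add: I2_def algebra_simps)

lemma carrier_SL2Z [simp]: "carrier SL2Z = {A. mdet A = 1}"
  and mult_SL2Z [simp]: "monoid.mult SL2Z = mmul"
  and one_SL2Z [simp]: "one SL2Z = I2"
  by (simp_all add: SL2Z_def)

lemma group_SL2Z: "group SL2Z"
proof (rule groupI)
  fix A assume "A \<in> carrier SL2Z"
  then show "\<exists>B\<in>carrier SL2Z. B \<otimes>\<^bsub>SL2Z\<^esub> A = \<one>\<^bsub>SL2Z\<^esub>"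
    by (intro bexI[of _ "madj A"]) (auto simp: mmul_madj_left mdet_madj)
qed (auto simp: mdet_mmul mmul_assoc I2_def)

interpretation SL2Z: group SL2Z
  by (rule group_SL2Z)

lemma inv_SL2Z [simp]: "mdet A = 1 \<Longrightarrow> inv\<^bsub>SL2Z\<^esub> A = madj A"
  by (rule SL2Z.inv_equality) (auto simp: mmul_madj_left mdet_madj)

lemma mcomm_eq_group_comm:
  "mdet A = 1 \<Longrightarrow> mdet B = 1 \<Longrightarrow>
   mcomm A B = A \<otimes>\<^bsub>SL2Z\<^esub> B \<otimes>\<^bsub>SL2Z\<^esub> inv\<^bsub>SL2Z\<^esub> A \<otimes>\<^bsub>SL2Z\<^esub> inv\<^bsub>SL2Z\<^esub> B"
  by (simp add: mcomm_def)

lemma PM_coset: "PM #>\<^bsub>SL2Z\<^esub> A = {A, mneg A}"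
  by (cases A) (auto simp: r_coset_def PM_def I2_def)

lemma normal_PM: "PM \<lhd> SL2Z"
proof -
  have "subgroup PM SL2Z"
    by (rule SL2Z.subgroupI) (auto simp: PM_def I2_def)
  moreover have "mmul (mmul A N) (madj A) \<in> PM" if "mdet A = 1" "N \<in> PM" for A N
    using that by (cases A) (auto simp: PM_def I2_def algebra_simps)
  ultimately show ?thesis
    by (auto simp: SL2Z.normal_inv_iff)
qed

lemma Gamma2_subset_carrier: "Gamma2 \<subseteq> carrier SL2Z"
  by (auto simp: Gamma2_def)

lemma derived_PSL2Z_Gamma2bar:
  "derived PSL2Z Gamma2bar = (\<lambda>A. PM #>\<^bsub>SL2Z\<^esub> A) ` derived SL2Z Gamma2"
proof -
  interpret group_hom SL2Z PSL2Z "\<lambda>A. PM #>\<^bsub>SL2Z\<^esub> A"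
    unfolding group_hom_def group_hom_axioms_def PSL2Z_def
    using group_SL2Z normal.factorgroup_is_group[OF normal_PM] normal.r_coset_hom_Mod[OF normal_PM]
    by blast
  show ?thesis
    unfolding Gamma2bar_def by (rule derived_img[OF Gamma2_subset_carrier])
qed

lemma psl_red_coset: "psl_red n (PM #>\<^bsub>SL2Z\<^esub> A) = psl_class n A"
  by (simp add: psl_red_def PM_coset psl_class_def)

lemma psl_red_derived:
  "psl_red n ` derived PSL2Z Gamma2bar = psl_class n ` derived SL2Z Gamma2"
  unfolding derived_PSL2Z_Gamma2bar image_image psl_red_coset ..

lemma derived_Gamma2_subgroup: "subgroup (derived SL2Z Gamma2) SL2Z"
  by (rule SL2Z.derived_is_subgroup[OF Gamma2_subset_carrier])

lemma mcomm_mem_derived: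
  assumes "A \<in> Gamma2" "B \<in> Gamma2"
  shows "mcomm A B \<in> derived SL2Z Gamma2"
proof -
  have "mdet A = 1" "mdet B = 1"
    using assms by (auto simp: Gamma2_def)
  then have "mcomm A B = A \<otimes>\<^bsub>SL2Z\<^esub> B \<otimes>\<^bsub>SL2Z\<^esub> inv\<^bsub>SL2Z\<^esub> A \<otimes>\<^bsub>SL2Z\<^esub> inv\<^bsub>SL2Z\<^esub> B"
    by (rule mcomm_eq_group_comm)
  also have "\<dots> \<in> derived_set SL2Z Gamma2"
    by (rule UN_I[OF assms(1)], rule UN_I[OF assms(2)]) simp
  finally show ?thesis
    unfolding derived_def by (rule generate.incl)
qed

lemma mred_mmul: "mred n (mmul A B) = mred n (mmul (mred n A) (mred n B))"
  by (cases A; cases B) (auto intro!: mod_add_cong mod_mult_cong)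

lemma mred_madj: "mred n (madj A) = mred n (madj (mred n A))"
  by (cases A) (simp add: mod_minus_eq)

lemma mred_mneg: "mred n (mneg A) = mred n (mneg (mred n A))"
  by (cases A) (simp add: mod_minus_eq)

lemma mred_mcomm: "mred n (mcomm A B) = mred n (mcomm (mred n A) (mred n B))"
  unfolding mcomm_def by (metis mred_mmul mred_madj)

lemma psl_class_cong:
  assumes "mred n M = mred n N \<or> mred n M = mred n (mneg N)"
  shows "psl_class n M = psl_class n N"
proof -
  have neg: "mred n (mneg A) = mred n (mneg B)" if "mred n A = mred n B" for A B
    using mred_mneg[of n A] mred_mneg[of n B] that by simp
  from assms show ?thesis
  proof
    assume "mred n M = mred n N"
    with neg[OF this] show ?thesis
      by (simp add: psl_class_def)
  next
    assume eq: "mred n M = mred n (mneg N)"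
    have "mred n (mneg M) = mred n N"
      using neg[OF eq] by (cases N) simp
    with eq show ?thesis
      by (simp add: psl_class_def insert_commute)
  qed
qed

(* SL_2(Z/3) and its quaternion subgroup, as matrices with entries in {0, 1, 2}.  Q8_F3 is the
   preimage of D3 and the commutator subgroup of SL_2(Z/3). *)
definition SL2_F3 :: "mat2 set" where
  "SL2_F3 = {(0,1,2,0), (0,1,2,1), (0,1,2,2), (0,2,1,0), (0,2,1,1), (0,2,1,2), (1,0,0,1),
    (1,0,1,1), (1,0,2,1), (1,1,0,1), (1,1,1,2), (1,1,2,0), (1,2,0,1), (1,2,1,0), (1,2,2,2),
    (2,0,0,2), (2,0,1,2), (2,0,2,2), (2,1,0,2), (2,1,1,1), (2,1,2,0), (2,2,0,2), (2,2,1,0),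
    (2,2,2,1)}"

definition Q8_F3 :: "mat2 set" where
  "Q8_F3 = {(1,0,0,1), (2,0,0,2), (0,2,1,0), (0,1,2,0), (2,1,1,1), (1,2,2,2), (1,1,1,2), (2,2,2,1)}"

lemma mred_3_mem_SL2_F3:
  assumes "mdet A = 1"
  shows "mred 3 A \<in> SL2_F3"
proof -
  have residues: "\<forall>x\<in>{0,1,2::int}. \<forall>y\<in>{0,1,2::int}. \<forall>z\<in>{0,1,2::int}. \<forall>w\<in>{0,1,2::int}.
      (x * w - y * z) mod 3 = 1 \<longrightarrow> (x, y, z, w) \<in> SL2_F3"
    by (simp add: SL2_F3_def)
  have range: "x mod 3 \<in> {0,1,2}" for x :: int
    by auto
  obtain a b c d where A: "A = (a, b, c, d)"
    by (cases A)
  have "(a * d - b * c) mod 3 = 1"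
    using assms by (simp add: A)
  then have "((a mod 3) * (d mod 3) - (b mod 3) * (c mod 3)) mod 3 = 1"
    by (metis mod_diff_eq mod_mult_eq)
  from residues[rule_format, OF range range range range this] show ?thesis
    by (simp add: A)
qed

lemma mred_3_mcomm_mem_Q8_F3:
  "\<forall>M\<in>SL2_F3. \<forall>N\<in>SL2_F3. mred 3 (mcomm M N) \<in> Q8_F3"
  by (simp add: SL2_F3_def Q8_F3_def mcomm_def)

lemma Q8_F3_closed:
  "\<forall>M\<in>Q8_F3. \<forall>N\<in>Q8_F3. mred 3 (mmul M N) \<in> Q8_F3"
  "\<forall>M\<in>Q8_F3. mred 3 (madj M) \<in> Q8_F3"
  by (simp_all add: Q8_F3_def)

lemma Q8_F3_preimage_subgroup: "subgroup {A. mdet A = 1 \<and> mred 3 A \<in> Q8_F3} SL2Z"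
proof (rule SL2Z.subgroupI)
  have "I2 \<in> {A. mdet A = 1 \<and> mred 3 A \<in> Q8_F3}"
    by (simp add: I2_def Q8_F3_def)
  then show "{A. mdet A = 1 \<and> mred 3 A \<in> Q8_F3} \<noteq> {}"
    by blast
  show "inv\<^bsub>SL2Z\<^esub> A \<in> {A. mdet A = 1 \<and> mred 3 A \<in> Q8_F3}"
    if "A \<in> {A. mdet A = 1 \<and> mred 3 A \<in> Q8_F3}" for A
    using that Q8_F3_closed(2) by (simp add: mdet_madj) (metis mred_madj)
  show "A \<otimes>\<^bsub>SL2Z\<^esub> B \<in> {A. mdet A = 1 \<and> mred 3 A \<in> Q8_F3}"
    if "A \<in> {A. mdet A = 1 \<and> mred 3 A \<in> Q8_F3}" "B \<in> {A. mdet A = 1 \<and> mred 3 A \<in> Q8_F3}" for A B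
    using that Q8_F3_closed(1) by (simp add: mdet_mmul) (metis mred_mmul)
qed auto

lemma derived_Gamma2_mod_3_subset: "derived SL2Z Gamma2 \<subseteq> {A. mdet A = 1 \<and> mred 3 A \<in> Q8_F3}"
proof -
  have "mcomm A B \<in> {A. mdet A = 1 \<and> mred 3 A \<in> Q8_F3}" if "mdet A = 1" "mdet B = 1" for A B
  proof -
    have "mred 3 (mcomm A B) \<in> Q8_F3"
      using mred_3_mcomm_mem_Q8_F3 mred_3_mem_SL2_F3[OF that(1)] mred_3_mem_SL2_F3[OF that(2)]
      by (metis mred_mcomm)
    moreover have "mdet (mcomm A B) = 1"
      using that by (simp add: mcomm_def mdet_mmul mdet_madj)
    ultimately show ?thesis
      by simp
  qed
  then have "derived_set SL2Z Gamma2 \<subseteq> {A. mdet A = 1 \<and> mred 3 A \<in> Q8_F3}"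
    by (auto simp: Gamma2_def mcomm_def)
  then show ?thesis
    unfolding derived_def by (rule SL2Z.generate_subgroup_incl[OF _ Q8_F3_preimage_subgroup])
qed

lemma psl_class_3_mem_D3:
  assumes "mred 3 A \<in> Q8_F3"
  shows "psl_class 3 A \<in> D3"
proof -
  have "\<forall>R\<in>Q8_F3. \<exists>N\<in>{I2, (0,-1,1,0), (-1,1,1,1), (1,1,1,-1)}.
      R = mred 3 N \<or> R = mred 3 (mneg N)"
    by (simp add: Q8_F3_def I2_def)
  then obtain N where N: "N \<in> {I2, (0,-1,1,0), (-1,1,1,1), (1,1,1,-1)}"
    and eq: "mred 3 A = mred 3 N \<or> mred 3 A = mred 3 (mneg N)"
    using assms by blast
  from eq have "psl_class 3 A = psl_class 3 N"
    by (rule psl_class_cong)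
  then show ?thesis
    unfolding D3_def using N by (rule image_eqI)
qed

lemma D3_subset_image_derived_Gamma2: "D3 \<subseteq> psl_class 3 ` derived SL2Z Gamma2"
proof -
  have comm: "psl_class 3 N \<in> psl_class 3 ` derived SL2Z Gamma2"
    if "U \<in> Gamma2" "V \<in> Gamma2" "mred 3 (mcomm U V) = mred 3 (mneg N)" for N U V
    using mcomm_mem_derived[OF that(1,2)] psl_class_cong[of 3 "mcomm U V" N] that(3) by blast
  have "psl_class 3 I2 \<in> psl_class 3 ` derived SL2Z Gamma2"
    using subgroup.one_closed[OF derived_Gamma2_subgroup] by simp
  moreover have "psl_class 3 (0,-1,1,0) \<in> psl_class 3 ` derived SL2Z Gamma2"
    by (rule comm[of "(1,2,0,1)" "(1,0,2,1)"]) (simp_all add: Gamma2_def I2_def mcomm_def)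
  moreover have "psl_class 3 (-1,1,1,1) \<in> psl_class 3 ` derived SL2Z Gamma2"
    by (rule comm[of "(1,2,0,1)" "(1,0,-2,1)"]) (simp_all add: Gamma2_def I2_def mcomm_def)
  moreover have "psl_class 3 (1,1,1,-1) \<in> psl_class 3 ` derived SL2Z Gamma2"
    by (rule comm[of "(1,0,2,1)" "(1,-2,0,1)"]) (simp_all add: Gamma2_def I2_def mcomm_def)
  ultimately show ?thesis
    by (simp add: D3_def)
qed

lemma image_derived_Gamma2_mod_3: "psl_class 3 ` derived SL2Z Gamma2 = D3"
  using derived_Gamma2_mod_3_subset psl_class_3_mem_D3 D3_subset_image_derived_Gamma2 by blast

definition derived_mod :: "int \<Rightarrow> mat2 set" where
  "derived_mod n = {M. \<exists>A \<in> derived SL2Z Gamma2. mred n A = mred n M}"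

lemma derived_mod_cong: "M \<in> derived_mod n \<Longrightarrow> mred n M = mred n N \<Longrightarrow> N \<in> derived_mod n"
  unfolding derived_mod_def by auto

lemma derived_mod_mmul:
  assumes "M \<in> derived_mod n" "N \<in> derived_mod n"
  shows "mmul M N \<in> derived_mod n"
proof -
  obtain A B where A: "A \<in> derived SL2Z Gamma2" "mred n A = mred n M"
    and B: "B \<in> derived SL2Z Gamma2" "mred n B = mred n N"
    using assms unfolding derived_mod_def by blast
  have "mmul A B \<in> derived SL2Z Gamma2"
    using subgroup.m_closed[OF derived_Gamma2_subgroup A(1) B(1)] by simp
  moreover have "mred n (mmul A B) = mred n (mmul M N)"
    by (metis A(2) B(2) mred_mmul)
  ultimately show ?thesis
    unfolding derived_mod_def by blast
qed

lemma mcomm_mem_derived_mod: "A \<in> Gamma2 \<Longrightarrow> B \<in> Gamma2 \<Longrightarrow> mcomm A B \<in> derived_mod n"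
  unfolding derived_mod_def using mcomm_mem_derived by blast

lemma mred_mcomm_upper_unipotent:
  assumes "mdet (a, b, c, d) = 1" "n dvd c"
  shows "mred n (mcomm (a, b, c, d) (1, s, 0, 1)) = mred n (1, s * (a\<^sup>2 - 1), 0, 1)"
proof -
  obtain k where c: "c = n * k"
    using assms(2) by blast
  have "mcomm (a, b, c, d) (1, s, 0, 1) = (mdet (a, b, c, d) - s * a * c,
      s * (a\<^sup>2 - mdet (a, b, c, d)) + s\<^sup>2 * a * c, - s * c\<^sup>2,
      mdet (a, b, c, d) + s * a * c + s\<^sup>2 * c\<^sup>2)"
    by (simp add: mcomm_def algebra_simps power2_eq_square)
  then show ?thesis
    using assms(1) by (simp add: c mod_eq_dvd_iff power2_eq_square)
qed

lemma mred_mcomm_lower_unipotent: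
  assumes "mdet (a, b, c, d) = 1" "n dvd b"
  shows "mred n (mcomm (a, b, c, d) (1, 0, s, 1)) = mred n (1, 0, s * (d\<^sup>2 - 1), 1)"
proof -
  obtain k where b: "b = n * k"
    using assms(2) by blast
  have "mcomm (a, b, c, d) (1, 0, s, 1) = (mdet (a, b, c, d) + s * b * d + s\<^sup>2 * b\<^sup>2,
      - s * b\<^sup>2, s * (d\<^sup>2 - mdet (a, b, c, d)) + s\<^sup>2 * b * d, mdet (a, b, c, d) - s * b * d)"
    by (simp add: mcomm_def algebra_simps power2_eq_square)
  then show ?thesis
    using assms(1) by (simp add: b mod_eq_dvd_iff power2_eq_square)
qed

lemma prime_solve_linear_mod:
  fixes p c r :: int
  assumes "Factorial_Ring.prime p" "\<not> p dvd c"
  obtains x where "(x * c) mod p = r mod p"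
proof -
  have "gcd c p = 1"
    using prime_imp_coprime[OF assms] by (simp add: coprime_iff_gcd_eq_1 gcd.commute)
  then obtain u v where uv: "u * c + v * p = 1"
    using bezout_int[of c p] by metis
  have "(r * u) * c = r * (u * c + v * p) + p * (- r * v)"
    by (simp add: algebra_simps)
  then have "(r * u) * c = r + p * (- r * v)"
    by (simp add: uv)
  then show ?thesis
    by (intro that[of "r * u"]) (simp add: mod_eq_dvd_iff)
qed

lemma Gamma2_memI: "mdet A = 1 \<Longrightarrow> mred 2 A = (1, 0, 0, 1) \<Longrightarrow> A \<in> Gamma2"
  by (simp add: Gamma2_def I2_def)

lemma Gamma2_flip: "(a, b, c, d) \<in> Gamma2 \<Longrightarrow> (d, c, b, a) \<in> Gamma2"
  by (simp add: Gamma2_def I2_def algebra_simps)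

lemma even_unipotents_mem_Gamma2: "(1, 2 * t, 0, 1) \<in> Gamma2" "(1, 0, 2 * t, 1) \<in> Gamma2"
  by (simp_all add: Gamma2_def I2_def)

lemma Gamma2_upper_triangular_mod_prime:
  fixes p :: int
  assumes "Factorial_Ring.prime p" "odd p"
  obtains a b c d where "(a, b, c, d) \<in> Gamma2" "p dvd c" "a mod p = 2 mod p"
proof -
  have "\<not> p dvd 2"
  proof
    assume "p dvd 2"
    then have "p \<le> 2"
      by (simp add: zdvd_imp_le)
    with prime_ge_2_int[OF assms(1)] assms(2) show False
      by simp
  qed
  then have "\<not> p dvd p + 2"
    by (simp add: dvd_add_right_iff)
  then have "coprime (p + 2) p"
    using prime_imp_coprime[OF assms(1)] coprime_commute by blast
  moreover have "coprime (p + 2) 2"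
    using assms(2) by simp
  ultimately have "coprime (p + 2) (2 * p * (2 * p))"
    by (simp only: coprime_mult_right_iff)
  then obtain u v where uv: "u * (p + 2) + v * (2 * p * (2 * p)) = 1"
    using bezout_int[of "p + 2" "2 * p * (2 * p)"] by (metis coprime_iff_gcd_eq_1)
  have "odd (u * (p + 2) + v * (2 * p * (2 * p)))"
    using uv by simp
  then have "odd u"
    by simp
  have det: "mdet (p + 2, 2 * p, - 2 * p * v, u) = 1"
    using uv by (simp add: algebra_simps)
  have "(p + 2, 2 * p, - 2 * p * v, u) \<in> Gamma2"
    using \<open>odd u\<close> assms(2) by (intro Gamma2_memI[OF det]) (simp flip: odd_iff_mod_2_eq_one)
  then show ?thesis
    by (rule that) simp_all
qed

(* The matrix X below is congruent to (2 *; 0 1/2), so [X, (1 s; 0 1)] is congruent to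
   (1 3s; 0 1), and symmetrically for the flipped matrix and lower unipotents. *)
lemma unipotents_mem_derived_mod:
  fixes p :: int
  assumes "Factorial_Ring.prime p" "p > 3"
  shows "(1, u, 0, 1) \<in> derived_mod p" "(1, 0, u, 1) \<in> derived_mod p"
proof -
  have "odd p"
    using assms by (intro prime_odd_int) auto
  then obtain a b c d where X: "(a, b, c, d) \<in> Gamma2" "p dvd c" "a mod p = 2 mod p"
    using Gamma2_upper_triangular_mod_prime[OF assms(1)] by blast
  have det: "mdet (a, b, c, d) = 1" "mdet (d, c, b, a) = 1"
    using X(1) by (auto simp: Gamma2_def algebra_simps)
  have "\<not> p dvd 6"
  proof
    assume "p dvd 6"
    then have "p dvd 2 \<or> p dvd 3"
      using prime_dvd_mult_iff[OF assms(1), of 2 3] by simp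
    then show False
      using assms(2) zdvd_imp_le[of p 2] zdvd_imp_le[of p 3] by auto
  qed
  then obtain t where t: "(t * 6) mod p = u mod p"
    using prime_solve_linear_mod[OF assms(1)] by blast
  have "(2 * t * (a\<^sup>2 - 1)) mod p = (2 * t * (2\<^sup>2 - 1)) mod p"
    by (intro mod_mult_cong mod_diff_cong refl) (metis X(3) power_mod)
  also have "\<dots> = u mod p"
    using t by (simp add: mult.commute mult.left_commute)
  finally have key: "(2 * t * (a\<^sup>2 - 1)) mod p = u mod p" .
  have "mcomm (a, b, c, d) (1, 2 * t, 0, 1) \<in> derived_mod p"
    using X(1) even_unipotents_mem_Gamma2(1) by (rule mcomm_mem_derived_mod)
  then show "(1, u, 0, 1) \<in> derived_mod p"
    by (rule derived_mod_cong) (simp add: mred_mcomm_upper_unipotent[OF det(1) X(2)] key)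
  have "mcomm (d, c, b, a) (1, 0, 2 * t, 1) \<in> derived_mod p"
    using Gamma2_flip[OF X(1)] even_unipotents_mem_Gamma2(2) by (rule mcomm_mem_derived_mod)
  then show "(1, 0, u, 1) \<in> derived_mod p"
    by (rule derived_mod_cong) (simp add: mred_mcomm_lower_unipotent[OF det(2) X(2)] key)
qed

lemma unipotent_factorization_mod_prime:
  fixes p a b c d :: int
  assumes "Factorial_Ring.prime p" "\<not> p dvd c" "p dvd a * d - b * c - 1"
  obtains x y where "mred p (mmul (mmul (1, x, 0, 1) (1, 0, c, 1)) (1, y, 0, 1)) = mred p (a, b, c, d)"
proof -
  obtain x where x: "(x * c) mod p = (a - 1) mod p"
    using prime_solve_linear_mod[OF assms(1,2)] by blast
  obtain y where y: "(y * c) mod p = (d - 1) mod p"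
    using prime_solve_linear_mod[OF assms(1,2)] by blast
  have x': "p dvd x * c - (a - 1)" and y': "p dvd y * c - (d - 1)"
    using x y by (simp_all add: mod_eq_dvd_iff)
  have "c * ((1 + x * c) * y + x - b) = (y * c - (d - 1)) + (x * c - (a - 1)) * (y * c - (d - 1))
     + (x * c - (a - 1)) * d + (a - 1) * (y * c - (d - 1)) + (a * d - b * c - 1)"
    by (simp add: algebra_simps)
  also have "p dvd \<dots>"
    using x' y' assms(3) by (intro dvd_add dvd_mult dvd_mult2) auto
  finally have "p dvd (1 + x * c) * y + x - b"
    using assms(2) prime_dvd_mult_iff[OF assms(1)] by blast
  with x' y' have "mred p (1 + x * c, (1 + x * c) * y + x, c, c * y + 1) = mred p (a, b, c, d)"
    by (simp add: mod_eq_dvd_iff algebra_simps)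
  then show ?thesis
    by (intro that[of x y]) (simp add: algebra_simps)
qed

lemma SL2_mod_prime_generated_by_unipotents:
  fixes p :: int and S :: "mat2 set"
  assumes "Factorial_Ring.prime p"
    and upper: "\<And>u. (1, u, 0, 1) \<in> S" and lower: "\<And>u. (1, 0, u, 1) \<in> S"
    and mmul_closed: "\<And>A B. A \<in> S \<Longrightarrow> B \<in> S \<Longrightarrow> mmul A B \<in> S"
    and mred_closed: "\<And>A B. A \<in> S \<Longrightarrow> mred p A = mred p B \<Longrightarrow> B \<in> S"
    and "mdet M mod p = 1 mod p"
  shows "M \<in> S"
proof -
  have generic: "(a, b, c, d) \<in> S"
    if c: "\<not> p dvd c" and unimodular: "p dvd a * d - b * c - 1" for a b c d
  proof -
    obtain x y where "mred p (mmul (mmul (1, x, 0, 1) (1, 0, c, 1)) (1, y, 0, 1)) = mred p (a, b, c, d)"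
      using unipotent_factorization_mod_prime[OF assms(1) c unimodular] .
    moreover have "mmul (mmul (1, x, 0, 1) (1, 0, c, 1)) (1, y, 0, 1) \<in> S"
      by (intro mmul_closed upper lower)
    ultimately show ?thesis
      using mred_closed by blast
  qed
  obtain a b c d where M: "M = (a, b, c, d)"
    by (cases M)
  have det: "p dvd a * d - b * c - 1"
    using assms(6) by (simp add: M mod_eq_dvd_iff)
  show ?thesis
  proof (cases "p dvd c")
    case False
    then show ?thesis
      using generic det M by simp
  next
    case True
    have "\<not> p dvd a"
    proof
      assume "p dvd a"
      with True have "p dvd a * d - b * c"
        by (simp add: dvd_diff)
      from dvd_diff[OF this det] have "is_unit p"
        by simp
      with assms(1) show False
        by (simp add: not_prime_unit)
    qed
    then have "(a, b, a + c, b + d) \<in> S"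
      using True det by (intro generic) (auto simp: dvd_add_right_iff algebra_simps)
    then have "mmul (1, 0, -1, 1) (a, b, a + c, b + d) \<in> S"
      by (intro mmul_closed lower)
    then show ?thesis
      by (simp add: M)
  qed
qed

lemma image_derived_Gamma2_mod_prime:
  fixes p :: int
  assumes "Factorial_Ring.prime p" "p > 3"
  shows "psl_class p ` derived SL2Z Gamma2 = PSL2_mod p"
proof
  show "psl_class p ` derived SL2Z Gamma2 \<subseteq> PSL2_mod p"
    using subgroup.subset[OF derived_Gamma2_subgroup] by (auto simp: PSL2_mod_def)
next
  show "PSL2_mod p \<subseteq> psl_class p ` derived SL2Z Gamma2"
  proof
    fix C assume "C \<in> PSL2_mod p"
    then obtain M where M: "mdet M mod p = 1 mod p" "C = psl_class p M"
      unfolding PSL2_mod_def by blast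
    have "M \<in> derived_mod p"
      using assms(1) unipotents_mem_derived_mod[OF assms] derived_mod_mmul derived_mod_cong M(1)
      by (rule SL2_mod_prime_generated_by_unipotents)
    then obtain A where "A \<in> derived SL2Z Gamma2" "mred p A = mred p M"
      unfolding derived_mod_def by blast
    then show "C \<in> psl_class p ` derived SL2Z Gamma2"
      using M(2) psl_class_cong by blast
  qed
qed

theorem proposition12:
  shows "psl_red 3 ` derived PSL2Z Gamma2bar = D3 \<and>
         (\<forall>p::nat. Factorial_Ring.prime p \<and> p > 3 \<longrightarrow>
            psl_red (int p) ` derived PSL2Z Gamma2bar = PSL2_mod (int p))"
  unfolding psl_red_derived
  using image_derived_Gamma2_mod_3 image_derived_Gamma2_mod_prime by simp

end
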